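(* Let $p,q\ge1$, $N>\max(p,q)$, let $\mu$ be a $q\times p$ matrix of measures, and assume $\mathscr M_N$ admits a Gauss--Borel factorization $\mathscr M_N=\mathscr L_N^{-1}\mathscr U_N^{-1}$ (with $\mathscr L_n,\mathscr U_n$, $n\le N$, the leading principal submatrices). Define \[\mathscr T_N:=\mathscr L_N\Lambda^{[N,N+q]}_{[q]}\mathscr M^{[N+q,N]}\mathscr U_N,\quad \mathscr T^{[N-q,N]}:=\mathscr L_{N-q}\Lambda^{[N-q,N]}_{[q]}\mathscr L_N^{-1},\quad \mathscr T^{[N,N-p]}:=\mathscr U_N^{-1}\big(\Lambda^{[N-p,N]}_{[p]}\big)^\top\mathscr U_{N-p}.\] Then $\mathscr T_N\in\mathbb R^{N\times N}$, $\mathscr T^{[N-q,N]}\in\mathbb R^{(N-q)\times N}$ and $\mathscr T^{[N,N-p]}\in\mathbb R^{N\times(N-p)}$ are banded matrices with $q$ superdiagonals and $p$ subdiagonals, i.e. their $(i,j)$ entries vanish unless $-p\le j-i\le q$.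
   Context: All matrices are indexed from $0$. $\mu$ is a $q\times p$ matrix of real measures with finite moments. For $r,n\ge1$, $X^{[n]}_{[r]}(x)$ is the $n\times r$ matrix whose row $k$ is $x^{\lfloor k/r\rfloor}e_{k\bmod r}^\top$ ($e_0,\dots,e_{r-1}$ standard basis of $\mathbb R^r$). Moment matrices: $\mathscr M^{[n,m]}=\int X^{[n]}_{[q]}\,\mathrm d\mu\,(X^{[m]}_{[p]})^\top$, $\mathscr M_n=\mathscr M^{[n,n]}$. Gauss--Borel factorization: $\mathscr M_N=\mathscr L_N^{-1}\mathscr U_N^{-1}$, $\mathscr L_N$ nonsingular lower triangular, $\mathscr U_N$ nonsingular upper triangular. For $r,n\ge1$, $\Lambda^{[n,n+r]}_{[r]}$ is the $n\times(n+r)$ matrix with entries $\delta_{j,i+r}$. *)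

theory Defs
  imports "HOL-Analysis.Analysis" "Jordan_Normal_Form.Matrix"
begin

text \<open>A real (signed) measure on the real line is represented by its Jordan decomposition:
  a pair of (nonnegative) Borel measures, the signed measure being their difference.
  The matrix of measures mu is given by two families mup a b, mum a b (a < q, b < p).\<close>

definition has_finite_moments :: "real measure \<Rightarrow> bool" where
  "has_finite_moments m \<longleftrightarrow> sets m = sets borel \<and> (\<forall>k::nat. integrable m (\<lambda>x. x ^ k))"

definition smoment :: "real measure \<Rightarrow> real measure \<Rightarrow> nat \<Rightarrow> real" where
  "smoment mp mm k = (\<integral>x. x ^ k \<partial>mp) - (\<integral>x. x ^ k \<partial>mm)"

text \<open>Moment matrix M^{[n,m]} = int X^{[n]}_{[q]} d mu (X^{[m]}_{[p]})^T; its (i,j) entry is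
  int x^(i div q) x^(j div p) d mu_{i mod q, j mod p}.\<close>
definition moment_mat ::
  "nat \<Rightarrow> nat \<Rightarrow> (nat \<Rightarrow> nat \<Rightarrow> real measure) \<Rightarrow> (nat \<Rightarrow> nat \<Rightarrow> real measure)
     \<Rightarrow> nat \<Rightarrow> nat \<Rightarrow> real mat" where
  "moment_mat q p mup mum n m =
     mat n m (\<lambda>(i,j). smoment (mup (i mod q) (j mod p)) (mum (i mod q) (j mod p)) (i div q + j div p))"

definition shift_mat :: "nat \<Rightarrow> nat \<Rightarrow> real mat" where
  "shift_mat r n = mat n (n + r) (\<lambda>(i,j). if j = i + r then 1 else 0)"

definition lead_mat :: "nat \<Rightarrow> 'a mat \<Rightarrow> 'a mat" where
  "lead_mat n A = mat n n (\<lambda>(i,j). A $$ (i,j))"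

definition lower_tri :: "'a::zero mat \<Rightarrow> bool" where
  "lower_tri A \<longleftrightarrow> (\<forall>i < dim_row A. \<forall>j < dim_col A. i < j \<longrightarrow> A $$ (i,j) = 0)"

definition banded :: "nat \<Rightarrow> nat \<Rightarrow> 'a::zero mat \<Rightarrow> bool" where
  "banded q p A \<longleftrightarrow> (\<forall>i < dim_row A. \<forall>j < dim_col A.
      \<not> (- int p \<le> int j - int i \<and> int j - int i \<le> int q) \<longrightarrow> A $$ (i,j) = 0)"

end

theory Submission
  imports Defs
begin

(* Entry (i,j) of a moment matrix depends only on (i mod q, j mod p, i div q + j div p), so
   shifting the rows by q is the same as shifting the columns by p (block Hankel symmetry):
   Lambda_q M^[n+q,m] = M^[n,m+p] Lambda_p^T.  The factorization says that L_N M_N = U_N^-1 is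
   upper and M_N U_N = L_N^-1 is lower triangular, and by triangularity this persists when L_N, U_N
   are cut down to leading blocks and M_N is replaced by a moment matrix of another size.  Each T is
   then written once as a product whose factors have at most 0, q, 0 superdiagonals, and once, after
   moving the shift across the moment matrix, as a product whose factors have at most 0, p, 0
   subdiagonals; these bounds add up under matrix multiplication. *)

definition vanishes_above :: "int \<Rightarrow> 'a::zero mat \<Rightarrow> bool" where
  "vanishes_above a A \<longleftrightarrow>
     (\<forall>i < dim_row A. \<forall>j < dim_col A. int j > int i + a \<longrightarrow> A $$ (i,j) = 0)"

definition vanishes_below :: "int \<Rightarrow> 'a::zero mat \<Rightarrow> bool" where
  "vanishes_below a A \<longleftrightarrow>
     (\<forall>i < dim_row A. \<forall>j < dim_col A. int j < int i + a \<longrightarrow> A $$ (i,j) = 0)"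

lemma banded_iff_vanishes:
  "banded q p A \<longleftrightarrow> vanishes_above (int q) A \<and> vanishes_below (- int p) A"
  unfolding banded_def vanishes_above_def vanishes_below_def by (auto simp: not_le)

lemma lower_tri_iff_vanishes_above: "lower_tri A \<longleftrightarrow> vanishes_above 0 A"
  by (auto simp: lower_tri_def vanishes_above_def)

lemma upper_triangular_imp_vanishes_below: "upper_triangular A \<Longrightarrow> vanishes_below 0 A"
  by (auto simp: vanishes_below_def)

lemma index_mult_mat_sum:
  assumes "i < dim_row A" "j < dim_col B" "dim_col A = dim_row B"
  shows "(A * B) $$ (i,j) = (\<Sum>k < dim_col A. A $$ (i,k) * B $$ (k,j))"
  using assms by (auto simp: scalar_prod_def lessThan_atLeast0 intro!: sum.cong)

lemma vanishes_above_mult: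
  fixes A B :: "'a::semiring_0 mat"
  assumes A: "vanishes_above a A" and B: "vanishes_above b B" and dim: "dim_col A = dim_row B"
  shows "vanishes_above (a + b) (A * B)"
  unfolding vanishes_above_def
proof (intro allI impI)
  fix i j
  assume i: "i < dim_row (A * B)" and j: "j < dim_col (A * B)" and ij: "int j > int i + (a + b)"
  have "A $$ (i,k) * B $$ (k,j) = 0" if "k < dim_col A" for k
    using A B dim i j that ij unfolding vanishes_above_def
    by (cases "int k > int i + a") force+
  then show "(A * B) $$ (i,j) = 0"
    using index_mult_mat_sum[of i A j B] i j dim by simp
qed

lemma vanishes_below_mult:
  fixes A B :: "'a::semiring_0 mat"
  assumes A: "vanishes_below a A" and B: "vanishes_below b B" and dim: "dim_col A = dim_row B"
  shows "vanishes_below (a + b) (A * B)"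
  unfolding vanishes_below_def
proof (intro allI impI)
  fix i j
  assume i: "i < dim_row (A * B)" and j: "j < dim_col (A * B)" and ij: "int j < int i + (a + b)"
  have "A $$ (i,k) * B $$ (k,j) = 0" if "k < dim_col A" for k
    using A B dim i j that ij unfolding vanishes_below_def
    by (cases "int k < int i + a") force+
  then show "(A * B) $$ (i,j) = 0"
    using index_mult_mat_sum[of i A j B] i j dim by simp
qed

lemma vanishes_above_shift_mat: "vanishes_above (int r) (shift_mat r n)"
  by (auto simp: vanishes_above_def shift_mat_def)

lemma vanishes_below_transpose_shift_mat: "vanishes_below (- int r) (transpose_mat (shift_mat r n))"
  by (auto simp: vanishes_below_def shift_mat_def)

lemma dim_lead_mat [simp]: "dim_row (lead_mat n A) = n" "dim_col (lead_mat n A) = n"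
  by (simp_all add: lead_mat_def)

lemma lead_mat_id: "A \<in> carrier_mat n n \<Longrightarrow> lead_mat n A = A"
  by (auto simp: lead_mat_def)

lemma vanishes_above_lead_mat:
  "vanishes_above a A \<Longrightarrow> n \<le> dim_row A \<Longrightarrow> n \<le> dim_col A \<Longrightarrow> vanishes_above a (lead_mat n A)"
  by (auto simp: vanishes_above_def lead_mat_def)

lemma vanishes_below_lead_mat:
  "vanishes_below a A \<Longrightarrow> n \<le> dim_row A \<Longrightarrow> n \<le> dim_col A \<Longrightarrow> vanishes_below a (lead_mat n A)"
  by (auto simp: vanishes_below_def lead_mat_def)

lemma mult_mat_assoc4:
  fixes A B C D :: "'a::semiring_0 mat"
  assumes A: "A \<in> carrier_mat n1 n2" and B: "B \<in> carrier_mat n2 n3"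
    and C: "C \<in> carrier_mat n3 n4" and D: "D \<in> carrier_mat n4 n5"
  shows "A * B * C * D = A * (B * (C * D))"
  by (simp only: assoc_mult_mat[OF mult_carrier_mat[OF A B] C D]
      assoc_mult_mat[OF A B mult_carrier_mat[OF C D]])

lemma upper_triangular_left_inverse:
  fixes A B :: "'a::idom mat"
  assumes A: "A \<in> carrier_mat n n" and B: "B \<in> carrier_mat n n"
    and upper: "upper_triangular A" and inverse: "B * A = 1\<^sub>m n"
  shows "upper_triangular B"
proof -
  have "B $$ (i,j) = 0" if "j < i" "i < n" for i j
    using that
  proof (induction j arbitrary: i rule: less_induct)
    case (less j)
    have column_j: "(B * A) $$ (i',j) = B $$ (i',j) * A $$ (j,j)" if "j \<le> i'" "i' < n" for i'
    proof -
      have "B $$ (i',k) * A $$ (k,j) = 0" if k: "k \<in> {..<n} - {j}" for k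
      proof (cases "k < j")
        case True
        then show ?thesis using less.IH[of k i'] \<open>j \<le> i'\<close> \<open>i' < n\<close> by simp
      next
        case False
        then show ?thesis using upper_triangularD[OF upper, of j k] A k by auto
      qed
      then have "(\<Sum>k<n. B $$ (i',k) * A $$ (k,j)) = B $$ (i',j) * A $$ (j,j)"
        using less.prems by (subst sum.mono_neutral_right[of _ "{j}"]) auto
      then show ?thesis
        using index_mult_mat_sum[of i' B j A] A B less.prems that by simp
    qed
    have "B $$ (j,j) * A $$ (j,j) = 1"
      using column_j[of j] inverse less.prems by simp
    then have "A $$ (j,j) \<noteq> 0" by auto
    moreover have "B $$ (i,j) * A $$ (j,j) = 0"
      using column_j[of i] inverse less.prems by simp
    ultimately show ?case by simp
  qed
  then show ?thesis using B by auto
qed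

lemma lower_tri_right_inverse:
  fixes A B :: "'a::idom mat"
  assumes A: "A \<in> carrier_mat n n" and B: "B \<in> carrier_mat n n"
    and lower: "lower_tri A" and inverse: "A * B = 1\<^sub>m n"
  shows "lower_tri B"
proof -
  have "transpose_mat B * transpose_mat A = 1\<^sub>m n"
    using transpose_mult[OF A B] inverse by simp
  moreover have "upper_triangular (transpose_mat A)"
    using lower A by (auto simp: lower_tri_def)
  ultimately have "upper_triangular (transpose_mat B)"
    using upper_triangular_left_inverse[of "transpose_mat A" n "transpose_mat B"] A B by auto
  then show ?thesis using B by (auto simp: lower_tri_def upper_triangular_def)
qed

lemma lower_tri_mult_lead_mat:
  fixes L :: "'a::semiring_0 mat"
  assumes L: "L \<in> carrier_mat N N" and lower: "lower_tri L" and "n \<le> N" "i < n" "j < m" "j < m'"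
  shows "(lead_mat n L * mat n m f) $$ (i,j) = (L * mat N m' f) $$ (i,j)"
proof -
  have "(\<Sum>k<n. L $$ (i,k) * f (k,j)) = (\<Sum>k<N. L $$ (i,k) * f (k,j))"
    using assms by (intro sum.mono_neutral_left) (auto simp: lower_tri_def)
  then show ?thesis
    using assms index_mult_mat_sum[of i "lead_mat n L" j "mat n m f"]
      index_mult_mat_sum[of i L j "mat N m' f"] by (simp add: lead_mat_def)
qed

lemma mult_lead_mat_upper_triangular:
  fixes U :: "'a::semiring_0 mat"
  assumes U: "U \<in> carrier_mat N N" and upper: "upper_triangular U" and "n \<le> N" "i < m" "i < m'" "j < n"
  shows "(mat m n f * lead_mat n U) $$ (i,j) = (mat m' N f * U) $$ (i,j)"
proof -
  have "(\<Sum>k<n. f (i,k) * U $$ (k,j)) = (\<Sum>k<N. f (i,k) * U $$ (k,j))"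
    using assms by (intro sum.mono_neutral_left) (auto simp: upper_triangular_def)
  then show ?thesis
    using assms index_mult_mat_sum[of i "mat m n f" j "lead_mat n U"]
      index_mult_mat_sum[of i "mat m' N f" j U] by (simp add: lead_mat_def)
qed

lemma dim_shift_mat [simp]: "dim_row (shift_mat r n) = n" "dim_col (shift_mat r n) = n + r"
  by (simp_all add: shift_mat_def)

lemma shift_mat_mult:
  assumes A: "A \<in> carrier_mat (n + r) m"
  shows "shift_mat r n * A = mat n m (\<lambda>(i,j). A $$ (i + r, j))"
proof (rule eq_matI)
  fix i j
  assume "i < dim_row (mat n m (\<lambda>(i,j). A $$ (i + r, j)))"
    and "j < dim_col (mat n m (\<lambda>(i,j). A $$ (i + r, j)))"
  then have "i < n" "j < m" by auto
  moreover have "(\<Sum>k<n + r. shift_mat r n $$ (i,k) * A $$ (k,j)) = A $$ (i + r, j)"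
    using \<open>i < n\<close> by (subst sum.mono_neutral_right[of _ "{i + r}"]) (auto simp: shift_mat_def)
  ultimately show "(shift_mat r n * A) $$ (i,j) = mat n m (\<lambda>(i,j). A $$ (i + r, j)) $$ (i,j)"
    using A index_mult_mat_sum[of i "shift_mat r n" j A] by simp
qed (use A in auto)

lemma mult_transpose_shift_mat:
  assumes A: "A \<in> carrier_mat m (n + r)"
  shows "A * transpose_mat (shift_mat r n) = mat m n (\<lambda>(i,j). A $$ (i, j + r))"
proof (rule eq_matI)
  fix i j
  assume "i < dim_row (mat m n (\<lambda>(i,j). A $$ (i, j + r)))"
    and "j < dim_col (mat m n (\<lambda>(i,j). A $$ (i, j + r)))"
  then have "i < m" "j < n" by auto
  moreover have "(\<Sum>k<n + r. A $$ (i,k) * transpose_mat (shift_mat r n) $$ (k,j)) = A $$ (i, j + r)"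
    using \<open>j < n\<close> by (subst sum.mono_neutral_right[of _ "{j + r}"]) (auto simp: shift_mat_def)
  ultimately show
    "(A * transpose_mat (shift_mat r n)) $$ (i,j) = mat m n (\<lambda>(i,j). A $$ (i, j + r)) $$ (i,j)"
    using A index_mult_mat_sum[of i A j "transpose_mat (shift_mat r n)"] by simp
qed (use A in auto)

lemma dim_moment_mat [simp]:
  "dim_row (moment_mat q p mup mum n m) = n" "dim_col (moment_mat q p mup mum n m) = m"
  by (simp_all add: moment_mat_def)

lemma shift_moment_mat:
  assumes "q > 0" "p > 0"
  shows "shift_mat q n * moment_mat q p mup mum (n + q) m
       = moment_mat q p mup mum n (m + p) * transpose_mat (shift_mat p m)"
proof -
  have "shift_mat q n * moment_mat q p mup mum (n + q) m
      = mat n m (\<lambda>(i,j). moment_mat q p mup mum (n + q) m $$ (i + q, j))"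
    by (rule shift_mat_mult) (simp add: carrier_matI)
  also have "\<dots> = mat n m (\<lambda>(i,j). moment_mat q p mup mum n (m + p) $$ (i, j + p))"
    using assms by (auto simp: moment_mat_def intro!: eq_matI)
  also have "\<dots> = moment_mat q p mup mum n (m + p) * transpose_mat (shift_mat p m)"
    by (rule mult_transpose_shift_mat[symmetric]) (simp add: carrier_matI)
  finally show ?thesis .
qed

locale moment_gauss_borel =
  fixes q p N :: nat and mup mum :: "nat \<Rightarrow> nat \<Rightarrow> real measure" and L U Linv Uinv :: "real mat"
  assumes q_pos: "q > 0" and p_pos: "p > 0"
    and L_carrier: "L \<in> carrier_mat N N" and U_carrier: "U \<in> carrier_mat N N"
    and Linv_carrier: "Linv \<in> carrier_mat N N" and Uinv_carrier: "Uinv \<in> carrier_mat N N"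
    and lower_L: "lower_tri L" and upper_U: "upper_triangular U"
    and L_Linv: "L * Linv = 1\<^sub>m N" and Uinv_U: "Uinv * U = 1\<^sub>m N"
    and factorization: "moment_mat q p mup mum N N = Linv * Uinv"
begin

abbreviation M :: "nat \<Rightarrow> nat \<Rightarrow> real mat" where
  "M \<equiv> moment_mat q p mup mum"

lemma moment_mult_U: "M N N * U = Linv"
  using factorization Uinv_U L_carrier U_carrier Linv_carrier Uinv_carrier by simp

lemma L_mult_moment: "L * M N N = Uinv"
  using factorization L_Linv L_carrier U_carrier Linv_carrier Uinv_carrier
  by (simp flip: assoc_mult_mat)

lemma lower_Linv: "lower_tri Linv"
  using lower_tri_right_inverse L_carrier Linv_carrier lower_L L_Linv .

lemma upper_Uinv: "upper_triangular Uinv"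
  using upper_triangular_left_inverse U_carrier Uinv_carrier upper_U Uinv_U .

lemma lead_L_mult_moment_vanishes_below:
  assumes "n \<le> N"
  shows "vanishes_below 0 (lead_mat n L * M n m)"
  unfolding vanishes_below_def
proof (intro allI impI)
  fix i j
  assume "i < dim_row (lead_mat n L * M n m)" "j < dim_col (lead_mat n L * M n m)" "int j < int i + 0"
  then have ij: "i < n" "j < m" "j < i" by auto
  have "(lead_mat n L * M n m) $$ (i,j) = (L * M N N) $$ (i,j)"
    unfolding moment_mat_def
    by (rule lower_tri_mult_lead_mat[OF L_carrier lower_L]) (use ij assms in auto)
  also have "\<dots> = 0"
    using upper_triangularD[OF upper_Uinv, of j i] L_mult_moment Uinv_carrier ij assms by simp
  finally show "(lead_mat n L * M n m) $$ (i,j) = 0" .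
qed

lemma moment_mult_lead_U_vanishes_above:
  assumes "n \<le> N"
  shows "vanishes_above 0 (M m n * lead_mat n U)"
  unfolding vanishes_above_def
proof (intro allI impI)
  fix i j
  assume "i < dim_row (M m n * lead_mat n U)" "j < dim_col (M m n * lead_mat n U)" "int j > int i + 0"
  then have ij: "i < m" "j < n" "i < j" by auto
  have "(M m n * lead_mat n U) $$ (i,j) = (M N N * U) $$ (i,j)"
    unfolding moment_mat_def
    by (rule mult_lead_mat_upper_triangular[OF U_carrier upper_U]) (use ij assms in auto)
  also have "\<dots> = 0"
    using moment_mult_U lower_Linv Linv_carrier ij assms by (auto simp: lower_tri_def)
  finally show "(M m n * lead_mat n U) $$ (i,j) = 0" .
qed

lemma L_vanishes_above: "vanishes_above 0 L"
  using lower_L by (simp add: lower_tri_iff_vanishes_above)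

lemma Linv_vanishes_above: "vanishes_above 0 Linv"
  using lower_Linv by (simp add: lower_tri_iff_vanishes_above)

lemma U_vanishes_below: "vanishes_below 0 U"
  using upper_U by (rule upper_triangular_imp_vanishes_below)

lemma Uinv_vanishes_below: "vanishes_below 0 Uinv"
  using upper_Uinv by (rule upper_triangular_imp_vanishes_below)

lemma banded_T_N: "banded q p (L * shift_mat q N * M (N + q) N * U)" (is "banded q p ?T")
proof -
  have S: "shift_mat q N \<in> carrier_mat N (N + q)"
    and T: "transpose_mat (shift_mat p N) \<in> carrier_mat (N + p) N"
    and Mq: "M (N + q) N \<in> carrier_mat (N + q) N" and Mp: "M N (N + p) \<in> carrier_mat N (N + p)"
    by auto
  have "vanishes_above (0 + (int q + 0)) (L * (shift_mat q N * (M (N + q) N * U)))"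
    using moment_mult_lead_U_vanishes_above[of N "N + q"] L_carrier U_carrier
    by (intro vanishes_above_mult L_vanishes_above vanishes_above_shift_mat)
      (simp_all add: lead_mat_id)
  moreover have "?T = L * (shift_mat q N * (M (N + q) N * U))"
    using L_carrier S Mq U_carrier by (rule mult_mat_assoc4)
  ultimately have above: "vanishes_above (int q) ?T" by simp
  have "?T = L * (shift_mat q N * M (N + q) N) * U"
    by (simp only: assoc_mult_mat[OF L_carrier S Mq])
  also have "\<dots> = L * (M N (N + p) * transpose_mat (shift_mat p N)) * U"
    by (simp only: shift_moment_mat[OF q_pos p_pos])
  also have "\<dots> = L * M N (N + p) * transpose_mat (shift_mat p N) * U"
    by (simp only: assoc_mult_mat[OF L_carrier Mp T])
  moreover have "vanishes_below (0 + - int p + 0)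
      (L * M N (N + p) * transpose_mat (shift_mat p N) * U)"
    using lead_L_mult_moment_vanishes_below[of N "N + p"] L_carrier U_carrier
    by (intro vanishes_below_mult U_vanishes_below vanishes_below_transpose_shift_mat)
      (simp_all add: lead_mat_id)
  ultimately have below: "vanishes_below (- int p) ?T" by simp
  show ?thesis using above below by (simp add: banded_iff_vanishes)
qed

lemma banded_T_q:
  assumes "q \<le> N"
  shows "banded q p (lead_mat (N - q) L * shift_mat q (N - q) * Linv)" (is "banded q p ?T")
proof -
  define n where "n = N - q"
  have n_q: "n + q = N" using assms by (simp add: n_def)
  have Ln: "lead_mat n L \<in> carrier_mat n n" and S: "shift_mat q n \<in> carrier_mat n N"
    and T: "transpose_mat (shift_mat p N) \<in> carrier_mat (N + p) N"
    and MN: "M N N \<in> carrier_mat N N" and Mp: "M n (N + p) \<in> carrier_mat n (N + p)"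
    using n_q by auto
  have "vanishes_above (0 + int q + 0) ?T"
    using L_carrier Linv_carrier n_q unfolding n_def[symmetric]
    by (intro vanishes_above_mult vanishes_above_lead_mat L_vanishes_above vanishes_above_shift_mat
        Linv_vanishes_above) auto
  then have above: "vanishes_above (int q) ?T" by simp
  have "?T = lead_mat n L * shift_mat q n * (M N N * U)"
    by (simp add: n_def moment_mult_U)
  also have "\<dots> = lead_mat n L * (shift_mat q n * M N N) * U"
    by (simp only: assoc_mult_mat[OF Ln S mult_carrier_mat[OF MN U_carrier]]
        assoc_mult_mat[OF S MN U_carrier] assoc_mult_mat[OF Ln mult_carrier_mat[OF S MN] U_carrier])
  also have "\<dots> = lead_mat n L * (M n (N + p) * transpose_mat (shift_mat p N)) * U"
    using shift_moment_mat[OF q_pos p_pos, of n mup mum N] by (simp only: n_q)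
  also have "\<dots> = lead_mat n L * M n (N + p) * transpose_mat (shift_mat p N) * U"
    by (simp only: assoc_mult_mat[OF Ln Mp T])
  moreover have "vanishes_below (0 + - int p + 0)
      (lead_mat n L * M n (N + p) * transpose_mat (shift_mat p N) * U)"
    using lead_L_mult_moment_vanishes_below[of n "N + p"] U_carrier n_q
    by (intro vanishes_below_mult U_vanishes_below vanishes_below_transpose_shift_mat) auto
  ultimately have below: "vanishes_below (- int p) ?T" by simp
  show ?thesis using above below by (simp add: banded_iff_vanishes)
qed

lemma banded_T_p:
  assumes "p \<le> N"
  shows "banded q p (Uinv * transpose_mat (shift_mat p (N - p)) * lead_mat (N - p) U)"
    (is "banded q p ?T")
proof -
  define n where "n = N - p"
  have n_p: "n + p = N" using assms by (simp add: n_def)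
  have Un: "lead_mat n U \<in> carrier_mat n n"
    and T: "transpose_mat (shift_mat p n) \<in> carrier_mat N n"
    and S: "shift_mat q N \<in> carrier_mat N (N + q)"
    and MN: "M N N \<in> carrier_mat N N" and Mq: "M (N + q) n \<in> carrier_mat (N + q) n"
    using n_p by auto
  have "vanishes_below (0 + - int p + 0) ?T"
    using U_carrier Uinv_carrier n_p unfolding n_def[symmetric]
    by (intro vanishes_below_mult vanishes_below_lead_mat U_vanishes_below
        vanishes_below_transpose_shift_mat Uinv_vanishes_below) auto
  then have below: "vanishes_below (- int p) ?T" by simp
  have "?T = L * M N N * transpose_mat (shift_mat p n) * lead_mat n U"
    by (simp add: n_def L_mult_moment)
  also have "\<dots> = L * (M N N * transpose_mat (shift_mat p n)) * lead_mat n U"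
    by (simp only: assoc_mult_mat[OF L_carrier MN T])
  also have "\<dots> = L * (shift_mat q N * M (N + q) n) * lead_mat n U"
    using shift_moment_mat[OF q_pos p_pos, of N mup mum n] by (simp only: n_p)
  also have "\<dots> = L * (shift_mat q N * (M (N + q) n * lead_mat n U))"
    by (simp only: assoc_mult_mat[OF L_carrier mult_carrier_mat[OF S Mq] Un]
        assoc_mult_mat[OF S Mq Un])
  moreover have "vanishes_above (0 + (int q + 0))
      (L * (shift_mat q N * (M (N + q) n * lead_mat n U)))"
    using moment_mult_lead_U_vanishes_above[of n "N + q"] L_carrier n_p
    by (intro vanishes_above_mult L_vanishes_above vanishes_above_shift_mat) auto
  ultimately have above: "vanishes_above (int q) ?T" by simp
  show ?thesis using above below by (simp add: banded_iff_vanishes)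
qed

end

theorem mainTheorem6:
  fixes p q N :: nat
    and mup mum :: "nat \<Rightarrow> nat \<Rightarrow> real measure"
    and L U Linv Uinv :: "real mat"
  assumes "p \<ge> 1" and "q \<ge> 1" and "N > max p q"
    and "\<forall>a < q. \<forall>b < p. has_finite_moments (mup a b) \<and> has_finite_moments (mum a b)"
    and "L \<in> carrier_mat N N" and "U \<in> carrier_mat N N"
    and "lower_tri L" and "upper_triangular U"
    and "Linv \<in> carrier_mat N N" and "L * Linv = 1\<^sub>m N" and "Linv * L = 1\<^sub>m N"
    and "Uinv \<in> carrier_mat N N" and "U * Uinv = 1\<^sub>m N" and "Uinv * U = 1\<^sub>m N"
    and "moment_mat q p mup mum N N = Linv * Uinv"
  shows "let TN = L * shift_mat q N * moment_mat q p mup mum (N + q) N * U;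
             Tq = lead_mat (N - q) L * shift_mat q (N - q) * Linv;
             Tp = Uinv * transpose_mat (shift_mat p (N - p)) * lead_mat (N - p) U
         in TN \<in> carrier_mat N N \<and> Tq \<in> carrier_mat (N - q) N \<and> Tp \<in> carrier_mat N (N - p)
            \<and> banded q p TN \<and> banded q p Tq \<and> banded q p Tp"
proof -
  interpret moment_gauss_borel q p N mup mum L U Linv Uinv
    using assms by unfold_locales auto
  have "q \<le> N" "p \<le> N" using assms(3) by auto
  then show ?thesis
    using banded_T_N banded_T_q banded_T_p L_carrier U_carrier Linv_carrier Uinv_carrier
    by (auto simp: Let_def)
qed

end
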